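(* Every vertex of a cubic brick $G$ is $\lambda$-matchable; that is, $\lambda(G)=n(G)$.
   Context: A brick is a nonbipartite matching covered graph with no nontrivial tight cut (a cut $C$ is tight if $|C\cap M|=1$ for every perfect matching $M$; trivial if one shore has at most one vertex). For a vertex $v$ of a cubic graph $G$, a $v$-matching is a spanning subgraph in which $v$ has degree $3$ and every other vertex degree $1$; $v$ is $\lambda$-matchable if a $v$-matching exists; $\lambda(G)$ counts such vertices. *)

theory Defs
  imports Main
begin

text \<open>Finite simple graphs: vertex set V, edge set E of 2-element subsets of V.
  (Cubic bricks are necessarily simple, so no generality is lost.)\<close>

definition graph :: "'a set \<Rightarrow> 'a set set \<Rightarrow> bool" where
  "graph V E \<longleftrightarrow> finite V \<and> (\<forall>e\<in>E. \<exists>u v. e = {u, v} \<and> u \<noteq> v \<and> u \<in> V \<and> v \<in> V)"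

definition degree :: "'a set set \<Rightarrow> 'a \<Rightarrow> nat" where
  "degree F v = card {e \<in> F. v \<in> e}"

definition cubic :: "'a set \<Rightarrow> 'a set set \<Rightarrow> bool" where
  "cubic V E \<longleftrightarrow> graph V E \<and> (\<forall>v\<in>V. degree E v = 3)"

definition perfect_matching :: "'a set \<Rightarrow> 'a set set \<Rightarrow> 'a set set \<Rightarrow> bool" where
  "perfect_matching V E M \<longleftrightarrow> M \<subseteq> E \<and> (\<forall>v\<in>V. degree M v = 1)"

inductive reachable :: "'a set set \<Rightarrow> 'a \<Rightarrow> 'a \<Rightarrow> bool" for E where
  refl: "reachable E u u"
| step: "reachable E u v \<Longrightarrow> {v, w} \<in> E \<Longrightarrow> reachable E u w"

definition connected_graph :: "'a set \<Rightarrow> 'a set set \<Rightarrow> bool" where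
  "connected_graph V E \<longleftrightarrow> (\<forall>u\<in>V. \<forall>v\<in>V. reachable E u v)"

definition matching_covered :: "'a set \<Rightarrow> 'a set set \<Rightarrow> bool" where
  "matching_covered V E \<longleftrightarrow> graph V E \<and> connected_graph V E \<and> E \<noteq> {} \<and>
     (\<forall>e\<in>E. \<exists>M. perfect_matching V E M \<and> e \<in> M)"

definition bipartite :: "'a set \<Rightarrow> 'a set set \<Rightarrow> bool" where
  "bipartite V E \<longleftrightarrow> (\<exists>A. \<forall>e\<in>E. card (e \<inter> A) = 1)"

definition cut :: "'a set set \<Rightarrow> 'a set \<Rightarrow> 'a set set" where
  "cut E X = {e \<in> E. card (e \<inter> X) = 1}"

definition tight_cut :: "'a set \<Rightarrow> 'a set set \<Rightarrow> 'a set \<Rightarrow> bool" where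
  "tight_cut V E X \<longleftrightarrow> X \<subseteq> V \<and>
     (\<forall>M. perfect_matching V E M \<longrightarrow> card (cut E X \<inter> M) = 1)"

definition nontrivial_shore :: "'a set \<Rightarrow> 'a set \<Rightarrow> bool" where
  "nontrivial_shore V X \<longleftrightarrow> X \<subseteq> V \<and> card X \<ge> 2 \<and> card (V - X) \<ge> 2"

definition brick :: "'a set \<Rightarrow> 'a set set \<Rightarrow> bool" where
  "brick V E \<longleftrightarrow> matching_covered V E \<and> \<not> bipartite V E \<and>
     \<not> (\<exists>X. nontrivial_shore V X \<and> tight_cut V E X)"

definition v_matching :: "'a set \<Rightarrow> 'a set set \<Rightarrow> 'a \<Rightarrow> 'a set set \<Rightarrow> bool" where
  "v_matching V E v F \<longleftrightarrow> F \<subseteq> E \<and> degree F v = 3 \<and> (\<forall>u\<in>V - {v}. degree F u = 1)"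

definition lambda_matchable :: "'a set \<Rightarrow> 'a set set \<Rightarrow> 'a \<Rightarrow> bool" where
  "lambda_matchable V E v \<longleftrightarrow> v \<in> V \<and> (\<exists>F. v_matching V E v F)"

definition lambda :: "'a set \<Rightarrow> 'a set set \<Rightarrow> nat" where
  "lambda V E = card {v \<in> V. lambda_matchable V E v}"

end

theory Submission
  imports Defs
begin

text \<open>A brick has no barrier with two or more vertices: an odd part of \<open>G - B\<close> with at least two
  vertices would be the shore of a nontrivial tight cut, an even part cannot exist in a connected
  matching covered graph, and if all parts are singletons then \<open>B\<close> is a colour class of a
  bipartition. With Tutte's theorem and a parity count this makes every brick bicritical: \<open>G - a - b\<close>
  has a perfect matching for any two vertices \<open>a \<noteq> b\<close>. For a vertex \<open>v\<close> with neighbours \<open>a\<close> and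
  \<open>b\<close>, such a matching together with the edges \<open>va\<close> and \<open>vb\<close> is a \<open>v\<close>-matching.

  Tutte's theorem is proved by Lov\'asz's argument for an edge-maximal counterexample, with perfect
  matchings encoded as fixpoint-free involutions.\<close>

section \<open>Fixpoint-free involutions and perfect matchings\<close>

definition fpf_involution :: "'a set \<Rightarrow> ('a \<Rightarrow> 'a) \<Rightarrow> bool" where
  "fpf_involution V m \<longleftrightarrow> (\<forall>v\<in>V. m v \<in> V \<and> m v \<noteq> v \<and> m (m v) = v)"

text \<open>A perfect matching of the graph induced by \<open>V\<close>, encoded by the partner function.\<close>
definition perfect_matching_fun :: "'a set \<Rightarrow> 'a set set \<Rightarrow> ('a \<Rightarrow> 'a) \<Rightarrow> bool" where
  "perfect_matching_fun V E m \<longleftrightarrow> fpf_involution V m \<and> (\<forall>v\<in>V. {v, m v} \<in> E)"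

lemma fpf_involutionD:
  assumes "fpf_involution V m" "v \<in> V"
  shows "m v \<in> V" "m v \<noteq> v" "m (m v) = v"
  using assms unfolding fpf_involution_def by auto

lemma fpf_involution_Diff_pair:
  assumes "fpf_involution V m" "x \<in> V"
  shows "fpf_involution (V - {x, m x}) m"
  using assms unfolding fpf_involution_def by (metis Diff_iff insertCI insertE singletonD)

lemma even_card_if_fpf_involution:
  assumes "finite V" "fpf_involution V m"
  shows "even (card V)"
  using assms
proof (induction "card V" arbitrary: V rule: less_induct)
  case less
  show ?case
  proof (cases "V = {}")
    case False
    then obtain x where x: "x \<in> V" by blast
    have pair: "{x, m x} \<subseteq> V" "card {x, m x} = 2"
      using fpf_involutionD[OF less.prems(2) x] x by auto
    then have card_rest: "card (V - {x, m x}) = card V - 2" "2 \<le> card V"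
      using card_Diff_subset card_mono less.prems(1) by (metis finite_subset, metis)
    have "even (card (V - {x, m x}))"
      using less.hyps[of "V - {x, m x}"] card_rest less.prems fpf_involution_Diff_pair[OF less.prems(2) x]
      by simp
    with card_rest show ?thesis by simp
  qed simp
qed

lemma fpf_involution_exists:
  assumes "finite V" "even (card V)"
  shows "\<exists>m. fpf_involution V m"
  using assms
proof (induction "card V" arbitrary: V rule: less_induct)
  case less
  show ?case
  proof (cases "V = {}")
    case True
    then show ?thesis by (intro exI) (simp add: fpf_involution_def)
  next
    case False
    then have "card V \<noteq> 0"
      using less.prems(1) by simp
    then have "2 \<le> card V"
      using less.prems(2) by presburger
    then obtain x x' where xx': "x \<in> V" "x' \<in> V" "x \<noteq> x'"
      using card_le_Suc0_iff_eq[OF less.prems(1)] by (metis One_nat_def not_less_eq_eq numeral_2_eq_2)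
    then have card_rest: "card (V - {x, x'}) = card V - 2"
      by (simp add: card_Diff_subset less.prems(1))
    then obtain m where m: "fpf_involution (V - {x, x'}) m"
      using less.hyps[of "V - {x, x'}"] less.prems \<open>2 \<le> card V\<close> by auto
    have "fpf_involution V (m(x := x', x' := x))"
      using m xx' unfolding fpf_involution_def by auto
    then show ?thesis by blast
  qed
qed

lemma perfect_matching_funD:
  assumes "perfect_matching_fun V E m" "v \<in> V"
  shows "m v \<in> V" "m v \<noteq> v" "m (m v) = v" "{v, m v} \<in> E"
  using assms unfolding perfect_matching_fun_def fpf_involution_def by auto

lemma perfect_matching_fun_mono:
  "perfect_matching_fun V E m \<Longrightarrow> E \<subseteq> E' \<Longrightarrow> perfect_matching_fun V E' m"
  unfolding perfect_matching_fun_def by auto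

lemma perfect_matching_fun_remove_edge:
  assumes "perfect_matching_fun V (insert {x, z} E) m" "x \<in> V" "m x \<noteq> z"
  shows "perfect_matching_fun V E m"
proof -
  have "{v, m v} \<noteq> {x, z}" if "v \<in> V" for v
  proof
    assume "{v, m v} = {x, z}"
    then have "v = x \<and> m v = z \<or> v = z \<and> m z = x"
      by (auto simp: doubleton_eq_iff)
    then show False
      using assms(3) perfect_matching_funD(3)[OF assms(1) that] by auto
  qed
  then show ?thesis
    using assms(1) unfolding perfect_matching_fun_def by simp
qed

definition clique :: "'a set set \<Rightarrow> 'a set \<Rightarrow> bool" where
  "clique E K \<longleftrightarrow> (\<forall>u\<in>K. \<forall>v\<in>K. u \<noteq> v \<longrightarrow> {u, v} \<in> E)"

lemma perfect_matching_fun_clique: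
  assumes "finite K" "even (card K)" "clique E K"
  shows "\<exists>m. perfect_matching_fun K E m"
proof -
  obtain m where m: "fpf_involution K m"
    using fpf_involution_exists[OF assms(1,2)] by blast
  have "{v, m v} \<in> E" if "v \<in> K" for v
    using assms(3) fpf_involutionD(1,2)[OF m that] that unfolding clique_def by simp
  with m show ?thesis
    unfolding perfect_matching_fun_def by blast
qed

lemma perfect_matching_fun_Union:
  assumes disjoint: "pairwise disjnt F" and blocks: "\<forall>K\<in>F. \<exists>m. perfect_matching_fun K E m"
  shows "\<exists>m. perfect_matching_fun (\<Union>F) E m"
proof -
  obtain M where M: "\<forall>K\<in>F. perfect_matching_fun K E (M K)"
    using bchoice[OF blocks] by blast
  define block where "block v = (THE K. K \<in> F \<and> v \<in> K)" for v
  have block: "block v = K" if "K \<in> F" "v \<in> K" for v K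
    unfolding block_def
    by (rule the_equality) (use that disjoint in \<open>auto simp: pairwise_def disjnt_def\<close>)
  have "perfect_matching_fun (\<Union>F) E (\<lambda>v. M (block v) v)"
    unfolding perfect_matching_fun_def fpf_involution_def
  proof (intro conjI ballI)
    fix v assume "v \<in> \<Union>F"
    then obtain K where K: "K \<in> F" "v \<in> K" by blast
    note m = perfect_matching_funD[OF M[rule_format, OF K(1)] K(2)]
    show "M (block v) v \<in> \<Union>F" "M (block v) v \<noteq> v" "{v, M (block v) v} \<in> E"
      using m K block[OF K] by auto
    show "M (block (M (block v) v)) (M (block v) v) = v"
      using m K block[OF K] block[OF K(1) m(1)] by simp
  qed
  then show ?thesis by blast
qed

section \<open>Partitions and components\<close>

definition separating_partition :: "'a set set \<Rightarrow> 'a set \<Rightarrow> 'a set set \<Rightarrow> bool" where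
  "separating_partition E W F \<longleftrightarrow> pairwise disjnt F \<and> \<Union>F = W \<and>
     (\<forall>K\<in>F. \<forall>u\<in>K. \<forall>q\<in>W. {u, q} \<in> E \<longrightarrow> q \<in> K)"

lemma separating_partition_subset:
  "separating_partition E W F \<Longrightarrow> K \<in> F \<Longrightarrow> K \<subseteq> W"
  unfolding separating_partition_def by blast

lemma separating_partition_unique:
  assumes "separating_partition E W F" "K \<in> F" "K' \<in> F" "u \<in> K" "u \<in> K'"
  shows "K = K'"
  using assms unfolding separating_partition_def by (meson disjnt_iff pairwiseD)

definition odd_parts :: "'a set set \<Rightarrow> 'a set set" where
  "odd_parts F = {K \<in> F. odd (card K)}"

lemma finite_odd_parts: "finite (\<Union>F) \<Longrightarrow> finite (odd_parts F)"
  unfolding odd_parts_def by (drule finite_UnionD) simp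

lemma even_card_Union_iff:
  assumes "finite (\<Union>F)" "pairwise disjnt F"
  shows "even (card (\<Union>F)) \<longleftrightarrow> even (card (odd_parts F))"
proof -
  have "card (\<Union>F) = sum card F"
    using card_Union_disjoint[OF assms(2)] assms(1) by (meson Union_upper finite_subset)
  then show ?thesis
    using even_sum_iff[OF finite_UnionD[OF assms(1)]] unfolding odd_parts_def by simp
qed

definition component_rel :: "'a set set \<Rightarrow> 'a set \<Rightarrow> 'a rel" where
  "component_rel E W = (Id_on W \<union> {(u, v). u \<in> W \<and> v \<in> W \<and> {u, v} \<in> E})\<^sup>+"

definition components :: "'a set set \<Rightarrow> 'a set \<Rightarrow> 'a set set" where
  "components E W = W // component_rel E W"

lemma equiv_component_rel: "equiv W (component_rel E W)"
proof (rule equivI)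
  let ?R = "Id_on W \<union> {(u, v). u \<in> W \<and> v \<in> W \<and> {u, v} \<in> E}"
  have "?R \<subseteq> W \<times> W" by auto
  then show "component_rel E W \<subseteq> W \<times> W"
    unfolding component_rel_def by (rule trancl_subset_Sigma)
  then show "refl_on W (component_rel E W)"
    unfolding component_rel_def refl_on_def by auto
  have "sym ?R"
    by (auto simp: sym_def insert_commute)
  then show "sym (component_rel E W)"
    unfolding component_rel_def by (rule sym_trancl)
  show "trans (component_rel E W)"
    unfolding component_rel_def by simp
qed

lemma separating_partition_components:
  "separating_partition E W (components E W)"
  unfolding separating_partition_def components_def
proof (intro conjI ballI impI)
  show "pairwise disjnt (W // component_rel E W)"
    using quotient_disj[OF equiv_component_rel] unfolding pairwise_def disjnt_def by blast
  show "\<Union>(W // component_rel E W) = W"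
    by (rule Union_quotient[OF equiv_component_rel])
  fix K u q assume K: "K \<in> W // component_rel E W" and uq: "u \<in> K" "q \<in> W" "{u, q} \<in> E"
  obtain a where a: "K = component_rel E W `` {a}"
    using K by (rule quotientE)
  have "u \<in> W"
    using uq(1) K Union_quotient[OF equiv_component_rel, of W E] by blast
  with uq have "(u, q) \<in> component_rel E W"
    unfolding component_rel_def by blast
  moreover have "(a, u) \<in> component_rel E W"
    using uq(1) a by blast
  ultimately show "q \<in> K"
    unfolding a component_rel_def by (meson Image_singleton_iff trancl_trans)
qed

lemma component_rel_induced_path:
  assumes "(u, q) \<in> component_rel E W"
  shows "q = u \<or> {u, q} \<in> E \<or>
    (\<exists>y z. {u, y} \<in> E \<and> {y, z} \<in> E \<and> {u, z} \<notin> E \<and> u \<noteq> z \<and> y \<in> W \<and> z \<in> W)"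
  using assms unfolding component_rel_def
proof (induction rule: trancl_induct)
  case (step v q)
  then have vq: "q = v \<or> {v, q} \<in> E \<and> v \<in> W \<and> q \<in> W"
    by auto
  show ?case
  proof (cases "v = u \<or> q = v")
    case True
    with step.IH vq show ?thesis by auto
  next
    case False
    with step.IH vq show ?thesis by blast
  qed
qed auto

lemma components_induced_path:
  assumes "K \<in> components E W" "u \<in> K" "q \<in> K" "u \<noteq> q" "{u, q} \<notin> E"
  obtains y z where "{u, y} \<in> E" "{y, z} \<in> E" "{u, z} \<notin> E" "u \<noteq> z" "y \<in> W" "z \<in> W"
proof -
  have K: "K \<in> W // component_rel E W"
    using assms(1) unfolding components_def .
  have uq: "(u, q) \<in> component_rel E W"
    using quotient_eq_iff[OF equiv_component_rel K K assms(2,3)] by simp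
  have "\<exists>y z. {u, y} \<in> E \<and> {y, z} \<in> E \<and> {u, z} \<notin> E \<and> u \<noteq> z \<and> y \<in> W \<and> z \<in> W"
    using component_rel_induced_path[OF uq] assms(4,5) by auto
  with that show ?thesis
    by blast
qed

definition tutte_condition :: "'a set \<Rightarrow> 'a set set \<Rightarrow> bool" where
  "tutte_condition V E \<longleftrightarrow>
     (\<forall>S F. S \<subseteq> V \<longrightarrow> separating_partition E (V - S) F \<longrightarrow> card (odd_parts F) \<le> card S)"

lemma tutte_condition_mono:
  assumes "tutte_condition V E" "E \<subseteq> E'"
  shows "tutte_condition V E'"
proof -
  have "separating_partition E W F" if "separating_partition E' W F" for W F
    using that assms(2) unfolding separating_partition_def by blast
  with assms(1) show ?thesis
    unfolding tutte_condition_def by blast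
qed

lemma even_card_if_tutte_condition:
  assumes "tutte_condition V E"
  shows "even (card V)"
proof (rule ccontr)
  assume "odd (card V)"
  then have "odd_parts {V} = {V}"
    by (auto simp: odd_parts_def)
  moreover have "separating_partition E (V - {}) {V}"
    unfolding separating_partition_def by simp
  then have "card (odd_parts {V}) \<le> card ({} :: 'a set)"
    using assms unfolding tutte_condition_def by blast
  ultimately show False
    by simp
qed

lemma clique_Un_universal:
  assumes "clique E K" "K \<subseteq> V" "T \<subseteq> S" "S \<subseteq> V"
    and universal: "\<forall>s\<in>S. \<forall>u\<in>V. u \<noteq> s \<longrightarrow> {u, s} \<in> E"
  shows "clique E (K \<union> T)"
  unfolding clique_def
proof (intro ballI impI)
  have edge: "{u, v} \<in> E" if "u \<in> V" "v \<in> T" "u \<noteq> v" for u v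
    using universal that assms(3) by blast
  fix u v assume uv: "u \<in> K \<union> T" "v \<in> K \<union> T" "u \<noteq> v"
  then have "u \<in> V" "v \<in> V"
    using assms(2-4) by blast+
  consider "v \<in> T" | "u \<in> T" | "u \<in> K" "v \<in> K"
    using uv by blast
  then show "{u, v} \<in> E"
  proof cases
    case 1
    then show ?thesis using edge \<open>u \<in> V\<close> uv(3) by blast
  next
    case 2
    then have "{v, u} \<in> E" using edge \<open>v \<in> V\<close> uv(3) by blast
    then show ?thesis by (simp only: insert_commute)
  next
    case 3
    then show ?thesis using assms(1) uv(3) unfolding clique_def by blast
  qed
qed

lemma perfect_matching_fun_if_clique_parts:
  assumes "finite V" "even (card V)" "S \<subseteq> V"
    and universal: "\<forall>s\<in>S. \<forall>u\<in>V. u \<noteq> s \<longrightarrow> {u, s} \<in> E"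
    and partition: "pairwise disjnt F" "\<Union>F = V - S"
    and cliques: "\<forall>K\<in>F. clique E K"
    and few_odd: "card (odd_parts F) \<le> card S"
  shows "\<exists>m. perfect_matching_fun V E m"
proof -
  have fin_S: "finite S"
    using assms(1,3) finite_subset by blast
  have fin_odd: "finite (odd_parts F)"
    using assms(1) partition(2) by (intro finite_odd_parts) simp
  obtain \<phi> where \<phi>: "\<phi> ` odd_parts F \<subseteq> S" "inj_on \<phi> (odd_parts F)"
    using card_le_inj[OF fin_odd fin_S few_odd] by blast
  define T where "T = \<phi> ` odd_parts F"
  define block where "block K = K \<union> \<phi> ` ({K} \<inter> odd_parts F)" for K
  define B where "B = insert (S - T) (block ` F)"
  have K_sub: "K \<subseteq> V - S" if "K \<in> F" for K
    using that partition(2) by blast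
  have block_S: "block K \<inter> S \<subseteq> T" "block K - S = K" if "K \<in> F" for K
    using K_sub[OF that] \<phi>(1) unfolding block_def T_def by auto
  have block_disj: "disjnt (block K) (block K')" if KK': "K \<in> F" "K' \<in> F" "K \<noteq> K'" for K K'
  proof -
    have "x \<notin> block K'" if x: "x \<in> block K" for x
    proof
      assume x': "x \<in> block K'"
      show False
      proof (cases "x \<in> S")
        case True
        then have "x = \<phi> K" "x = \<phi> K'" "K \<in> odd_parts F" "K' \<in> odd_parts F"
          using x x' K_sub \<open>K \<in> F\<close> \<open>K' \<in> F\<close> unfolding block_def by auto
        then show False
          using \<phi>(2) \<open>K \<noteq> K'\<close> by (metis inj_onD)
      next
        case False
        then have "x \<in> K" "x \<in> K'"
          using x x' block_S(2) \<open>K \<in> F\<close> \<open>K' \<in> F\<close> by blast+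
        then show False
          using partition(1) KK' unfolding pairwise_def disjnt_def by blast
      qed
    qed
    then show ?thesis
      unfolding disjnt_def by blast
  qed
  have "pairwise disjnt B"
  proof -
    have "pairwise disjnt (block ` F)"
      unfolding pairwise_def by (metis block_disj imageE)
    moreover have "disjnt (S - T) X" if "X \<in> block ` F" for X
      using that block_S(1) unfolding disjnt_def by blast
    ultimately show ?thesis
      unfolding B_def pairwise_insert by (auto simp: disjnt_sym)
  qed
  moreover have "\<Union>B = V"
  proof -
    have "\<Union>(block ` F) = \<Union>F \<union> T"
      unfolding block_def T_def odd_parts_def by auto
    then show ?thesis
      using partition(2) \<phi>(1) assms(3) unfolding B_def T_def by auto
  qed
  moreover have "\<exists>m. perfect_matching_fun X E m" if "X \<in> B" for X
  proof (rule perfect_matching_fun_clique)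
    have "X \<subseteq> V"
      using that \<open>\<Union>B = V\<close> by blast
    then show "finite X"
      using assms(1) finite_subset by blast
    have "card T = card (odd_parts F)"
      unfolding T_def using \<phi>(2) by (rule card_image)
    moreover have "card V = card S + card (V - S)"
      using assms(1,3) by (metis card_Diff_subset card_mono finite_subset le_add_diff_inverse)
    moreover have "even (card (V - S)) \<longleftrightarrow> even (card (odd_parts F))"
      using even_card_Union_iff[of F] partition assms(1) by simp
    ultimately have "even (card (S - T))"
      using assms(2) few_odd \<phi>(1) fin_S card_Diff_subset[of T S] unfolding T_def
      by (metis finite_subset even_add even_diff_nat)
    moreover have "even (card (block K))" if "K \<in> F" for K
    proof (cases "K \<in> odd_parts F")
      case True
      have "finite K"
        using K_sub[OF that] assms(1) by (meson finite_Diff finite_subset)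
      moreover have "block K = insert (\<phi> K) K" "\<phi> K \<notin> K"
        using True \<phi>(1) K_sub[OF that] unfolding block_def by auto
      ultimately show ?thesis
        using True unfolding odd_parts_def by simp
    next
      case False
      then show ?thesis
        using that unfolding block_def odd_parts_def by simp
    qed
    ultimately show "even (card X)"
      using \<open>X \<in> B\<close> unfolding B_def by blast
    have "clique E ({} \<union> (S - T))"
      by (rule clique_Un_universal[OF _ _ _ assms(3) universal]) (auto simp: clique_def)
    moreover have "clique E (block K)" if "K \<in> F" for K
      unfolding block_def
      by (rule clique_Un_universal[OF _ _ _ assms(3) universal]) (use cliques that K_sub \<phi>(1) in auto)
    ultimately show "clique E X"
      using \<open>X \<in> B\<close> unfolding B_def by auto
  qed
  ultimately show ?thesis
    using perfect_matching_fun_Union[of B E] by simp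
qed

section \<open>Exchanging two perfect matchings\<close>

lemma fpf_involution_switch:
  assumes "fpf_involution V m1" "fpf_involution V m2" "Q \<subseteq> V" "m1 ` Q \<subseteq> Q" "m2 ` Q \<subseteq> Q"
  shows "fpf_involution V (\<lambda>v. if v \<in> Q then m1 v else m2 v)" (is "fpf_involution V ?q")
  unfolding fpf_involution_def
proof
  fix v assume v: "v \<in> V"
  show "?q v \<in> V \<and> ?q v \<noteq> v \<and> ?q (?q v) = v"
  proof (cases "v \<in> Q")
    case True
    then show ?thesis
      using fpf_involutionD[OF assms(1) v] assms(4) by auto
  next
    case False
    then have "m2 v \<notin> Q"
      using fpf_involutionD(3)[OF assms(2) v] assms(5) by (metis image_subset_iff)
    then show ?thesis
      using False fpf_involutionD[OF assms(2) v] by auto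
  qed
qed

lemma fpf_involution_reroute:
  assumes m1: "fpf_involution V m1" and m2: "fpf_involution V m2"
    and "P \<subseteq> V" "y \<in> V - P" "z \<in> V - P" "y \<noteq> z"
    and "m2 ` P \<subseteq> P" "m1 ` P \<subseteq> P \<union> {y, z}" "m1 y \<in> P" "m1 z \<in> P"
  shows "fpf_involution V (\<lambda>v. if v = y then z else if v = z then y else if v \<in> P then m2 v else m1 v)"
    (is "fpf_involution V ?q")
  unfolding fpf_involution_def
proof
  fix v assume v: "v \<in> V"
  consider "v = y" | "v = z" | "v \<in> P" | "v \<notin> P \<union> {y, z}"
    by blast
  then show "?q v \<in> V \<and> ?q v \<noteq> v \<and> ?q (?q v) = v"
  proof cases
    case 3
    then have "m2 v \<in> P"
      using assms(7) by blast
    then show ?thesis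
      using 3 fpf_involutionD[OF m2 v] assms(4,5) by auto
  next
    case 4
    have "m1 v \<notin> P \<union> {y, z}"
    proof
      assume "m1 v \<in> P \<union> {y, z}"
      then have "v \<in> m1 ` (P \<union> {y, z})"
        using fpf_involutionD(3)[OF m1 v] by (metis image_eqI)
      then show False
        using 4 assms(8-10) by blast
    qed
    then show ?thesis
      using 4 fpf_involutionD[OF m1 v] by auto
  qed (use assms(4-6) in auto)
qed

lemma doubleton_in_insertD: "{v, u} \<in> insert {a, b} E \<Longrightarrow> v \<noteq> a \<Longrightarrow> v \<noteq> b \<Longrightarrow> {v, u} \<in> E"
  by (auto simp: doubleton_eq_iff)

locale alternating_walk =
  fixes V :: "'a set" and m1 m2 :: "'a \<Rightarrow> 'a" and y :: 'a
  assumes finite_V: "finite V"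
    and involution_m1: "fpf_involution V m1" and involution_m2: "fpf_involution V m2"
    and y_in_V: "y \<in> V"
begin

definition alt :: "nat \<Rightarrow> 'a \<Rightarrow> 'a" where
  "alt k = (if even k then m1 else m2)"

primrec walk :: "nat \<Rightarrow> 'a" where
  "walk 0 = y"
| walk_Suc: "walk (Suc k) = alt k (walk k)"

declare walk_Suc [simp del]

lemma fpf_involution_alt: "fpf_involution V (alt k)"
  using involution_m1 involution_m2 by (simp add: alt_def)

lemma walk_in_V: "walk k \<in> V"
  by (induction k) (simp_all add: walk_Suc y_in_V fpf_involutionD(1)[OF fpf_involution_alt])

lemma walk_back: "alt k (walk (Suc k)) = walk k"
  using fpf_involutionD(3)[OF fpf_involution_alt walk_in_V] by (simp add: walk_Suc)

lemma walk_shift: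
  assumes "even p" "walk p = y"
  shows "walk (p + k) = walk k"
  by (induction k) (use assms in \<open>simp_all add: walk_Suc alt_def\<close>)

lemma walk_rewind:
  assumes "walk i = walk j" "i \<le> j" "even (j - i)"
  shows "walk (j - i) = y"
  using assms
proof (induction i arbitrary: j)
  case (Suc i)
  then obtain j' where j: "j = Suc j'"
    by (cases j) auto
  with Suc.prems have "alt i = alt j'"
    by (auto simp: alt_def)
  then have "walk i = walk j'"
    using walk_back[of i] walk_back[of j'] Suc.prems(1) j by metis
  then show ?case
    using Suc.IH[of j'] Suc.prems j by simp
qed simp

lemma walk_returns: "\<exists>p>0. even p \<and> walk p = y"
proof -
  have "\<not> inj_on (\<lambda>k. walk (2 * k)) {..card V}"
  proof
    assume "inj_on (\<lambda>k. walk (2 * k)) {..card V}"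
    then have "card {..card V} \<le> card V"
      by (rule card_inj_on_le) (use walk_in_V finite_V in auto)
    then show False
      by simp
  qed
  then obtain i j where "i < j" "walk (2 * i) = walk (2 * j)"
    unfolding inj_on_def by (metis linorder_neqE_nat)
  then show ?thesis
    using walk_rewind[of "2 * i" "2 * j"] by (intro exI[of _ "2 * j - 2 * i"]) auto
qed

text \<open>The walk can never traverse its starting vertex in the opposite direction: otherwise it
  would be its own reversal, and the middle of the reversal is an edge from a vertex to itself.\<close>
lemma walk_odd_neq_start:
  assumes "odd L"
  shows "walk L \<noteq> y"
proof
  assume L: "walk L = y"
  have mirror: "walk (L - i) = walk i" if "i \<le> L" for i
    using that
  proof (induction i)
    case (Suc i)
    then have "L - i = Suc (L - Suc i)"
      by simp
    moreover have "alt (L - Suc i) = alt i"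
      using assms Suc.prems by (auto simp: alt_def)
    ultimately show ?case
      using walk_back[of "L - Suc i"] Suc by (simp add: walk_Suc)
  qed (simp add: L)
  have "L - L div 2 = Suc (L div 2)"
    using assms by presburger
  then have "walk (Suc (L div 2)) = walk (L div 2)"
    using mirror[of "L div 2"] by simp
  then show False
    using fpf_involutionD(2)[OF fpf_involution_alt walk_in_V] by (simp add: walk_Suc)
qed

lemma range_walk_closed:
  assumes "v \<in> range walk"
  shows "m1 v \<in> range walk" "m2 v \<in> range walk"
proof -
  obtain p where p: "p > 0" "even p" "walk p = y"
    using walk_returns by blast
  obtain k where "v = walk k"
    using assms by blast
  then obtain j where v: "v = walk (Suc j)"
    using walk_shift[OF p(2,3), of k] p(1) by (metis add_gr_0 gr0_conv_Suc)
  have "alt j v \<in> range walk" "alt (Suc j) v \<in> range walk"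
    using walk_back[of j] by (simp_all add: v) (metis rangeI walk_Suc)
  then show "m1 v \<in> range walk" "m2 v \<in> range walk"
    by (auto simp: alt_def split: if_splits)
qed

lemma m2_walk_segment:
  assumes "even n" "1 \<le> k" "k \<le> n"
  shows "m2 (walk k) \<in> walk ` {1..n}"
proof (cases "even k")
  case True
  obtain j where j: "k = Suc j" "odd j"
    using assms(2) True by (cases k) auto
  then have "m2 (walk k) = walk j"
    using walk_back[of j] by (simp add: alt_def)
  moreover have "1 \<le> j" "j \<le> n"
    using j assms(3) odd_pos[of j] by simp_all
  ultimately show ?thesis
    by auto
next
  case False
  then have "m2 (walk k) = walk (Suc k)" "Suc k \<le> n"
    using assms by (auto simp: walk_Suc alt_def dest: le_neq_implies_less)
  then show ?thesis
    by auto
qed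

lemma m1_walk_segment:
  assumes "1 \<le> k" "k \<le> n"
  shows "m1 (walk k) \<in> walk ` {1..n} \<union> {y, m1 (walk n)}"
proof (cases "even k")
  case True
  then have "m1 (walk k) = walk (Suc k)"
    by (simp add: walk_Suc alt_def)
  moreover have "walk (Suc k) \<in> walk ` {1..n}" if "k \<noteq> n"
    by (rule imageI) (use assms that in simp)
  ultimately show ?thesis
    by (cases "k = n") auto
next
  case False
  obtain j where j: "k = Suc j" "even j"
    using assms(1) False by (cases k) auto
  then have "m1 (walk k) = walk j"
    using walk_back[of j] by (simp add: alt_def)
  then show ?thesis
    using j assms(2) by (cases j) auto
qed

text \<open>If the walk meets the \<open>m1\<close>-edge \<open>{x, m1 x}\<close>, follow it from \<open>y\<close> up to the first
  endpoint \<open>c\<close> of that edge; its vertices after \<open>y\<close> form the set \<open>P\<close>.\<close>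
lemma walk_reaches_edge:
  assumes "x \<in> V" "x \<in> range walk" "y \<noteq> x" "y \<noteq> m1 x"
  obtains c P where "c \<in> {x, m1 x}" "P \<subseteq> V" "c \<in> P" "y \<notin> P" "m1 c \<notin> P" "m1 y \<in> P"
    "m2 ` P \<subseteq> P" "m1 ` P \<subseteq> P \<union> {y, m1 c}"
proof -
  define X where "X = {x, m1 x}"
  have X_m1: "m1 v \<in> X" if "v \<in> X" for v
    using that fpf_involutionD(3)[OF involution_m1 assms(1)] unfolding X_def by auto
  obtain n where n: "walk n \<in> X" "\<forall>k<n. walk k \<notin> X"
    using assms(2) exists_least_iff[of "\<lambda>n. walk n \<in> X"] unfolding X_def by blast
  have "n \<noteq> 0"
  proof
    assume "n = 0"
    then show False
      using n(1) assms(3,4) unfolding X_def by simp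
  qed
  have "even n"
  proof (rule ccontr)
    assume "odd n"
    then obtain j where j: "n = Suc j" "even j"
      using \<open>n \<noteq> 0\<close> by (metis even_Suc not0_implies_Suc)
    then have "walk j \<in> X"
      using X_m1[OF n(1)] walk_back[of j] by (simp add: alt_def)
    then show False
      using n(2) j(1) by simp
  qed
  define P where "P = walk ` {1..n}"
  have "y \<notin> P"
  proof
    assume "y \<in> P"
    then obtain k where k: "1 \<le> k" "k \<le> n" "walk k = y"
      unfolding P_def by auto
    have "even k"
      using walk_odd_neq_start k(3) by blast
    then have "walk (n - k) = walk n"
      using walk_shift[of k "n - k"] k(2,3) by simp
    moreover have "n - k < n"
      using k(1,2) by simp
    ultimately show False
      using n by metis
  qed
  moreover have "m1 (walk n) \<notin> P"
  proof
    assume "m1 (walk n) \<in> P"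
    then obtain k where k: "k \<le> n" "walk k = m1 (walk n)"
      unfolding P_def by auto
    then have "k = n"
      using n X_m1 by (metis le_neq_implies_less)
    then show False
      using k fpf_involutionD(2)[OF involution_m1 walk_in_V] by metis
  qed
  moreover have "m2 ` P \<subseteq> P" "m1 ` P \<subseteq> P \<union> {y, m1 (walk n)}"
    using m2_walk_segment[OF \<open>even n\<close>] m1_walk_segment[of _ n]
    unfolding P_def image_subset_iff by auto
  moreover have "walk n \<in> P" "m1 y \<in> P" "P \<subseteq> V"
    using \<open>n \<noteq> 0\<close> walk_in_V unfolding P_def by (auto simp: walk_Suc alt_def intro!: image_eqI[of _ _ 1])
  ultimately show ?thesis
    using that n(1) unfolding X_def by blast
qed

end

lemma perfect_matching_fun_exchange:
  assumes "finite V" "x \<in> V" "y \<in> V"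
    and m1: "perfect_matching_fun V (insert {x, z} E) m1" "m1 x = z"
    and m2: "perfect_matching_fun V (insert {y, w} E) m2" "m2 y = w"
    and edges: "{x, y} \<in> E" "{y, z} \<in> E"
    and distinct: "y \<notin> {x, z}" "w \<notin> {x, z}"
  shows "\<exists>m. perfect_matching_fun V E m"
proof -
  have inv: "fpf_involution V m1" "fpf_involution V m2"
    using m1(1) m2(1) unfolding perfect_matching_fun_def by auto
  interpret alternating_walk V m1 m2 y
    using assms(1,3) inv by unfold_locales
  have edge1: "{v, m1 v} \<in> E" if "v \<in> V" "v \<notin> {x, z}" for v
    using perfect_matching_funD(4)[OF m1(1) that(1)] that(2) doubleton_in_insertD by blast
  have edge2: "{v, m2 v} \<in> E" if "v \<in> V" "v \<notin> {y, w}" for v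
    using perfect_matching_funD(4)[OF m2(1) that(1)] that(2) doubleton_in_insertD by blast
  show ?thesis
  proof (cases "x \<in> range walk")
    case False
    define Q where "Q = range walk"
    have "m1 ` Q \<subseteq> Q" "m2 ` Q \<subseteq> Q" "Q \<subseteq> V"
      using range_walk_closed walk_in_V unfolding Q_def by auto
    then have "fpf_involution V (\<lambda>v. if v \<in> Q then m1 v else m2 v)"
      by (intro fpf_involution_switch inv)
    moreover have "y \<in> Q"
      unfolding Q_def by (metis rangeI walk.simps(1))
    then have "w \<in> Q"
      using range_walk_closed(2) m2(2) unfolding Q_def by blast
    moreover have "x \<notin> Q" "z \<notin> Q"
      using False range_walk_closed(1)[of z] fpf_involutionD(3)[OF inv(1) assms(2)] m1(2)
      unfolding Q_def by auto
    then have "{v, if v \<in> Q then m1 v else m2 v} \<in> E" if "v \<in> V" for v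
      using edge1 edge2 that \<open>y \<in> Q\<close> \<open>w \<in> Q\<close> by auto
    ultimately show ?thesis
      unfolding perfect_matching_fun_def by blast
  next
    case True
    then obtain c P where P: "c \<in> {x, z}" "P \<subseteq> V" "c \<in> P" "y \<notin> P" "m1 c \<notin> P" "m1 y \<in> P"
      "m2 ` P \<subseteq> P" "m1 ` P \<subseteq> P \<union> {y, m1 c}"
      using walk_reaches_edge assms(2) distinct(1) m1(2) by blast
    define z' where "z' = m1 c"
    have z': "z' \<in> {x, z}" "{x, z} = {c, z'}" "m1 z' = c" "z' \<noteq> y" "z' \<in> V"
      using P(1-3) fpf_involutionD[OF inv(1) assms(2)] fpf_involutionD(1)[OF inv(1)] m1(2) distinct(1)
      unfolding z'_def by auto
    define q where "q v = (if v = y then z' else if v = z' then y else if v \<in> P then m2 v else m1 v)" for v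
    have "fpf_involution V q"
      unfolding q_def
      by (rule fpf_involution_reroute[OF inv P(2)]) (use P z' assms(2,3) in \<open>auto simp: z'_def\<close>)
    moreover have "{v, q v} \<in> E" if "v \<in> V" for v
    proof -
      have yz': "{y, z'} \<in> E"
        using z'(1) edges by (metis insert_commute insertE singletonD)
      consider "v = y" | "v = z'" | "v \<in> P" | "v \<notin> P" "v \<noteq> y" "v \<noteq> z'"
        by blast
      then show ?thesis
      proof cases
        case 1
        then show ?thesis using yz' unfolding q_def by simp
      next
        case 2
        then show ?thesis using yz' z'(4) unfolding q_def by (simp add: insert_commute)
      next
        case 3
        have "m2 v \<in> P"
          using 3 P(7) by blast
        then have "v \<noteq> w"
          using P(4) fpf_involutionD(3)[OF inv(2) assms(3)] m2(2) by auto
        moreover have "v \<noteq> z'"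
          using 3 P(5) unfolding z'_def by blast
        ultimately show ?thesis
          using 3 P(4) edge2[OF that] unfolding q_def by auto
      next
        case 4
        then have "v \<notin> {x, z}"
          using z'(2) P(3) by auto
        then show ?thesis
          using 4 edge1[OF that] unfolding q_def by auto
      qed
    qed
    ultimately show ?thesis
      unfolding perfect_matching_fun_def by blast
  qed
qed

section \<open>Tutte's theorem\<close>

theorem perfect_matching_fun_if_tutte_condition:
  assumes "finite V" "tutte_condition V E"
  shows "\<exists>m. perfect_matching_fun V E m"
  using assms(2)
proof (induction "card (Pow V - E)" arbitrary: E rule: less_induct)
  case less
  show ?case
  proof (rule ccontr)
    assume no_pm: "\<nexists>m. perfect_matching_fun V E m"
    have forced: "m u = z" if "perfect_matching_fun V (insert {u, z} E) m" "u \<in> V" for u z m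
      using perfect_matching_fun_remove_edge[OF that] no_pm by blast
    have saturated: "\<exists>m. perfect_matching_fun V (insert e E) m" if "e \<subseteq> V" "e \<notin> E" for e
    proof (rule less.hyps)
      show "card (Pow V - insert e E) < card (Pow V - E)"
        using that assms(1) by (intro psubset_card_mono) auto
      show "tutte_condition V (insert e E)"
        using tutte_condition_mono[OF less.prems] by blast
    qed
    define S where "S = {s \<in> V. \<forall>u\<in>V. u \<noteq> s \<longrightarrow> {u, s} \<in> E}"
    have "S \<subseteq> V" and universal: "\<forall>s\<in>S. \<forall>u\<in>V. u \<noteq> s \<longrightarrow> {u, s} \<in> E"
      unfolding S_def by auto
    note components = separating_partition_components[of E "V - S"]
    show False
    proof (cases "\<forall>K \<in> components E (V - S). clique E K")
      case True
      have "card (odd_parts (components E (V - S))) \<le> card S"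
        using less.prems components \<open>S \<subseteq> V\<close> unfolding tutte_condition_def by blast
      then show False
        using perfect_matching_fun_if_clique_parts[OF assms(1)
            even_card_if_tutte_condition[OF less.prems] \<open>S \<subseteq> V\<close> universal _ _ True]
          components no_pm unfolding separating_partition_def by blast
    next
      case False
      then obtain K u q where Kuq: "K \<in> components E (V - S)" "u \<in> K" "q \<in> K" "u \<noteq> q" "{u, q} \<notin> E"
        unfolding clique_def by blast
      then obtain y z where yz: "{u, y} \<in> E" "{y, z} \<in> E" "{u, z} \<notin> E" "u \<noteq> z" "y \<in> V - S" "z \<in> V - S"
        by (rule components_induced_path)
      have "u \<in> V"
        using Kuq(1,2) components unfolding separating_partition_def by blast
      obtain w where w: "w \<in> V" "w \<noteq> y" "{y, w} \<notin> E"
        using yz(5) unfolding S_def by (auto simp: insert_commute)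
      obtain m1 where m1: "perfect_matching_fun V (insert {u, z} E) m1"
        using saturated[of "{u, z}"] \<open>u \<in> V\<close> yz(3,6) by blast
      obtain m2 where m2: "perfect_matching_fun V (insert {y, w} E) m2"
        using saturated[of "{y, w}"] w yz(5) by blast
      have "y \<notin> {u, z}" "w \<notin> {u, z}"
        using yz(1-3) w(3) by (auto simp: insert_commute)
      then show False
        using perfect_matching_fun_exchange[OF assms(1) \<open>u \<in> V\<close> _ m1 forced[OF m1 \<open>u \<in> V\<close>] m2
            forced[OF m2] yz(1,2)] yz(5) no_pm by blast
    qed
  qed
qed

section \<open>Barriers in bricks\<close>

lemma graph_edge_at:
  assumes "graph V E" "e \<in> E" "v \<in> e"
  obtains a where "e = {v, a}" "a \<noteq> v" "a \<in> V" "v \<in> V"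
  using assms unfolding graph_def by (metis empty_iff insert_commute insert_iff)

lemma perfect_matching_fun_of_perfect_matching:
  assumes graph: "graph V E" and M: "perfect_matching V E M"
  obtains m where "perfect_matching_fun V E m" "M = (\<lambda>v. {v, m v}) ` V"
proof -
  have "M \<subseteq> E"
    using M unfolding perfect_matching_def by simp
  have partner: "\<exists>!a. {v, a} \<in> M" if "v \<in> V" for v
  proof -
    have "card {e \<in> M. v \<in> e} = 1"
      using M that unfolding perfect_matching_def degree_def by blast
    then obtain e where e: "{e \<in> M. v \<in> e} = {e}"
      by (rule card_1_singletonE)
    then have "e \<in> M" "v \<in> e"
      by auto
    then obtain a where a: "e = {v, a}"
      using \<open>M \<subseteq> E\<close> graph_edge_at[OF graph] by blast
    show ?thesis
    proof (rule ex1I)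
      show "{v, a} \<in> M"
        using \<open>e \<in> M\<close> a by simp
      fix b assume "{v, b} \<in> M"
      then have "{v, b} \<in> {e \<in> M. v \<in> e}"
        by simp
      then have "{v, b} = {v, a}"
        using e a by simp
      then show "b = a"
        by (auto simp: doubleton_eq_iff)
    qed
  qed
  define m where "m v = (THE a. {v, a} \<in> M)" for v
  have in_M: "{v, m v} \<in> M" if "v \<in> V" for v
    using theI'[OF partner[OF that]] unfolding m_def .
  have unique: "a = m v" if "v \<in> V" "{v, a} \<in> M" for v a
    using partner[OF that(1)] in_M[OF that(1)] that(2) by (metis the1_equality)
  have fpf: "m v \<in> V \<and> m v \<noteq> v \<and> m (m v) = v" if v: "v \<in> V" for v
  proof -
    obtain a where "{v, m v} = {v, a}" "a \<noteq> v" "a \<in> V"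
      using graph_edge_at[OF graph] in_M[OF v] \<open>M \<subseteq> E\<close> by blast
    moreover have "{m v, v} \<in> M"
      using in_M[OF v] by (simp add: insert_commute)
    ultimately show ?thesis
      using unique v by (auto simp: doubleton_eq_iff)
  qed
  have "M \<subseteq> (\<lambda>v. {v, m v}) ` V"
  proof
    fix e assume "e \<in> M"
    then obtain p q where "e = {p, q}" "p \<in> V"
      using graph \<open>M \<subseteq> E\<close> unfolding graph_def by blast
    with \<open>e \<in> M\<close> unique show "e \<in> (\<lambda>v. {v, m v}) ` V"
      by blast
  qed
  then have "M = (\<lambda>v. {v, m v}) ` V"
    using in_M by blast
  moreover have "perfect_matching_fun V E m"
    unfolding perfect_matching_fun_def fpf_involution_def using fpf in_M \<open>M \<subseteq> E\<close> by blast
  ultimately show ?thesis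
    using that by blast
qed

lemma partner_eqI:
  assumes "perfect_matching_fun V E m" "v \<in> V" "{v, a} \<in> (\<lambda>u. {u, m u}) ` V"
  shows "a = m v"
proof -
  obtain u where u: "u \<in> V" "{v, a} = {u, m u}"
    using assms(3) by blast
  then show ?thesis
    using perfect_matching_funD(3)[OF assms(1) u(1)] by (auto simp: doubleton_eq_iff)
qed

definition exits :: "('a \<Rightarrow> 'a) \<Rightarrow> 'a set \<Rightarrow> 'a set" where
  "exits m K = {u \<in> K. m u \<notin> K}"

lemma exits_nonempty_if_odd:
  assumes "perfect_matching_fun V E m" "K \<subseteq> V" "odd (card K)"
  shows "exits m K \<noteq> {}"
proof
  assume "exits m K = {}"
  have "fpf_involution K m"
    unfolding fpf_involution_def
  proof
    fix v assume "v \<in> K"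
    then show "m v \<in> K \<and> m v \<noteq> v \<and> m (m v) = v"
      using \<open>exits m K = {}\<close> perfect_matching_funD(2,3)[OF assms(1)] assms(2)
      unfolding exits_def by blast
  qed
  moreover have "finite K"
    using assms(3) card.infinite by force
  ultimately show False
    using even_card_if_fpf_involution assms(3) by blast
qed

lemma exits_into_barrier:
  assumes "perfect_matching_fun V E m" "separating_partition E (V - B) F" "K \<in> F" "u \<in> exits m K"
  shows "m u \<in> B"
proof (rule ccontr)
  assume "m u \<notin> B"
  have "u \<in> V"
    using assms(2-4) unfolding separating_partition_def exits_def by blast
  then have "m u \<in> V - B" "{u, m u} \<in> E"
    using perfect_matching_funD[OF assms(1)] \<open>m u \<notin> B\<close> by auto
  then show False
    using assms(2-4) unfolding separating_partition_def exits_def by blast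
qed

text \<open>Every odd part sends at least one matching edge into \<open>B\<close>, and these edges are distinct;
  so if \<open>B\<close> is no larger than the number of odd parts, each odd part sends exactly one and
  together they cover \<open>B\<close>.\<close>
lemma barrier_exits:
  assumes "finite V" "B \<subseteq> V" and F: "separating_partition E (V - B) F"
    and many_odd: "card B \<le> card (odd_parts F)" and m: "perfect_matching_fun V E m"
  shows "m ` (\<Union>K\<in>odd_parts F. exits m K) = B" "\<forall>K\<in>odd_parts F. card (exits m K) = 1"
proof -
  define T where "T = (\<Union>K\<in>odd_parts F. exits m K)"
  have parts: "K \<in> F" "K \<subseteq> V - B" "odd (card K)" if "K \<in> odd_parts F" for K
    using that F unfolding separating_partition_def odd_parts_def by auto
  have fin_odd: "finite (odd_parts F)"
    using F assms(1) unfolding separating_partition_def by (intro finite_odd_parts) simp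
  have exits_sub: "exits m K \<subseteq> K" for K
    unfolding exits_def by blast
  have fin_exits: "finite (exits m K)" if "K \<in> odd_parts F" for K
    using exits_sub parts(2)[OF that] assms(1) by (meson Diff_subset finite_subset subset_trans)
  have at_least_one: "1 \<le> card (exits m K)" if "K \<in> odd_parts F" for K
    using exits_nonempty_if_odd[OF m _ parts(3)[OF that]] parts(2)[OF that] fin_exits[OF that]
    by (auto simp: Suc_le_eq card_gt_0_iff)
  have "exits m K \<inter> exits m K' = {}" if "K \<in> odd_parts F" "K' \<in> odd_parts F" "K \<noteq> K'" for K K'
  proof -
    have "disjnt K K'"
      using F parts(1)[OF that(1)] parts(1)[OF that(2)] that(3)
      unfolding separating_partition_def by (meson pairwiseD)
    then show ?thesis
      using exits_sub[of K] exits_sub[of K'] unfolding disjnt_def by blast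
  qed
  then have card_T: "card T = (\<Sum>K\<in>odd_parts F. card (exits m K))"
    unfolding T_def using fin_exits fin_odd by (intro card_UN_disjoint) auto
  have "m ` T \<subseteq> B"
    using exits_into_barrier[OF m F] parts(1) unfolding T_def by blast
  have "T \<subseteq> V"
    using parts(2) exits_sub unfolding T_def by blast
  then have "inj_on m T"
    using perfect_matching_funD(3)[OF m] by (metis inj_onI subsetD)
  have "finite B"
    using assms(1,2) finite_subset by blast
  have "card T \<le> card B"
    using card_inj_on_le[OF \<open>inj_on m T\<close> \<open>m ` T \<subseteq> B\<close> \<open>finite B\<close>] .
  moreover have "card (odd_parts F) \<le> card T"
    using sum_mono[of "odd_parts F" "\<lambda>_. 1" "\<lambda>K. card (exits m K)"] at_least_one card_T by simp
  ultimately have "card T = card B" "card T = card (odd_parts F)"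
    using many_odd by linarith+
  with \<open>finite B\<close> show "m ` T = B"
    using \<open>m ` T \<subseteq> B\<close> card_image[OF \<open>inj_on m T\<close>] \<open>card T = card B\<close> card_subset_eq by metis
  have "(\<Sum>K\<in>odd_parts F. card (exits m K) - 1) = 0"
    using sum_subtractf_nat[of "odd_parts F" "\<lambda>_. 1" "\<lambda>K. card (exits m K)"] at_least_one card_T
      \<open>card T = card (odd_parts F)\<close>
    by simp
  then have "card (exits m K) \<le> 1" if "K \<in> odd_parts F" for K
    using fin_odd that by simp
  then show "\<forall>K\<in>odd_parts F. card (exits m K) = 1"
    using at_least_one le_antisym by blast
qed

context
  fixes V :: "'a set" and E B F m
  assumes finite: "finite V" and B: "B \<subseteq> V" and F: "separating_partition E (V - B) F"
    and many_odd: "card B \<le> card (odd_parts F)" and m: "perfect_matching_fun V E m"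
begin

lemma odd_part_subset: "K \<in> odd_parts F \<Longrightarrow> K \<subseteq> V - B"
  using separating_partition_subset[OF F] unfolding odd_parts_def by blast

lemma barrier_matched_outside:
  assumes "b \<in> B"
  shows "m b \<notin> B"
proof -
  obtain K u where K: "K \<in> odd_parts F" "u \<in> exits m K" "b = m u"
    using assms unfolding barrier_exits(1)[OF finite B F many_odd m, symmetric] by blast
  then have "u \<in> V - B"
    using odd_part_subset unfolding exits_def by blast
  then show ?thesis
    using perfect_matching_funD(3)[OF m] K(3) by auto
qed

lemma odd_part_unique_exit:
  assumes "K \<in> odd_parts F"
  shows "\<exists>!u. u \<in> K \<and> m u \<notin> K"
proof -
  have "card (exits m K) = 1"
    using barrier_exits(2)[OF finite B F many_odd m] assms by (rule bspec)
  then obtain u where u: "exits m K = {u}"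
    by (rule card_1_singletonE)
  show ?thesis
  proof (rule ex1I)
    show "u \<in> K \<and> m u \<notin> K"
      using u unfolding exits_def by blast
    fix u' assume "u' \<in> K \<and> m u' \<notin> K"
    then have "u' \<in> exits m K"
      unfolding exits_def by simp
    then show "u' = u"
      using u by simp
  qed
qed

lemma even_part_matched_inside:
  assumes "K \<in> F" "even (card K)" "u \<in> K"
  shows "m u \<in> K"
proof (rule ccontr)
  assume "m u \<notin> K"
  then have "m u \<in> B"
    using exits_into_barrier[OF m F assms(1)] assms(3) unfolding exits_def by blast
  then obtain K' t where K': "K' \<in> odd_parts F" "t \<in> exits m K'" "m u = m t"
    unfolding barrier_exits(1)[OF finite B F many_odd m, symmetric] by blast
  have "u \<in> V" "t \<in> K'" "t \<in> V"
    using separating_partition_subset[OF F assms(1)] assms(3) K'(2) odd_part_subset[OF K'(1)]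
    unfolding exits_def by auto
  then have "u = t"
    using perfect_matching_funD(3)[OF m] K'(3) by metis
  then have "K' = K"
    using separating_partition_unique[OF F] K'(1) assms(1,3) \<open>t \<in> K'\<close> unfolding odd_parts_def by blast
  then show False
    using K'(1) assms(2) unfolding odd_parts_def by simp
qed

end

lemma tight_cut_if_unique_exit:
  assumes graph: "graph V E" and "K \<subseteq> V"
    and unique_exit: "\<And>m. perfect_matching_fun V E m \<Longrightarrow> \<exists>!u. u \<in> K \<and> m u \<notin> K"
  shows "tight_cut V E K"
  unfolding tight_cut_def
proof (intro conjI allI impI)
  fix M assume "perfect_matching V E M"
  then obtain m where m: "perfect_matching_fun V E m" and M: "M = (\<lambda>v. {v, m v}) ` V"
    using perfect_matching_fun_of_perfect_matching[OF graph] by blast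
  obtain u0 where u0: "u0 \<in> K" "m u0 \<notin> K" and unique: "\<And>u. u \<in> K \<Longrightarrow> m u \<notin> K \<Longrightarrow> u = u0"
    using unique_exit[OF m] by blast
  have "cut E K \<inter> M = {{u0, m u0}}"
  proof (intro equalityI subsetI)
    fix e assume e: "e \<in> cut E K \<inter> M"
    then obtain u where u: "u \<in> V" "e = {u, m u}"
      unfolding M by blast
    note mu = perfect_matching_funD[OF m u(1)]
    have "card (e \<inter> K) = 1"
      using e unfolding cut_def by simp
    then have "u \<in> K \<and> m u \<notin> K \<or> m u \<in> K \<and> m (m u) \<notin> K"
      using u(2) mu(2,3) by (cases "u \<in> K"; cases "m u \<in> K") auto
    then have "u = u0 \<or> m u = u0"
      using unique by blast
    then show "e \<in> {{u0, m u0}}"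
      using u(2) mu(3) by (auto simp: insert_commute)
  next
    fix e assume "e \<in> {{u0, m u0}}"
    then have e: "e = {u0, m u0}"
      by simp
    have "e \<inter> K = {u0}"
      using u0 e by auto
    moreover have "e \<in> M" "e \<in> E"
      using perfect_matching_funD(4)[OF m] u0(1) \<open>K \<subseteq> V\<close> e unfolding M by auto
    ultimately show "e \<in> cut E K \<inter> M"
      unfolding cut_def by simp
  qed
  then show "card (cut E K \<inter> M) = 1"
    by simp
qed (rule \<open>K \<subseteq> V\<close>)

lemma reachable_exit_edge:
  assumes "reachable E u v" "u \<in> K" "v \<notin> K"
  obtains p q where "{p, q} \<in> E" "p \<in> K" "q \<notin> K"
  using assms by (induction rule: reachable.induct) blast+

lemma matching_covered_partner:
  assumes "matching_covered V E" "{p, q} \<in> E"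
  obtains m where "perfect_matching_fun V E m" "p \<in> V" "m p = q"
proof -
  have graph: "graph V E"
    using assms(1) unfolding matching_covered_def by blast
  obtain M where "perfect_matching V E M" "{p, q} \<in> M"
    using assms unfolding matching_covered_def by blast
  moreover obtain m where "perfect_matching_fun V E m" "M = (\<lambda>v. {v, m v}) ` V"
    using perfect_matching_fun_of_perfect_matching[OF graph calculation(1)] by blast
  moreover have "p \<in> V"
    using graph_edge_at[OF graph assms(2)] by blast
  ultimately show ?thesis
    using that partner_eqI by metis
qed

text \<open>In a brick every barrier is trivial: an odd part with two vertices would be the shore of a
  nontrivial tight cut, an even part would contain an edge matched into \<open>B\<close> although it is matched
  internally, and with only singleton parts the barrier would make the graph bipartite.\<close>
lemma brick_no_barrier:
  assumes brick: "brick V E" and B: "B \<subseteq> V" "2 \<le> card B"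
    and F: "separating_partition E (V - B) F" and many_odd: "card B \<le> card (odd_parts F)"
  shows False
proof -
  have graph: "graph V E" and covered: "matching_covered V E"
    and connected: "connected_graph V E" and finite: "finite V"
    using brick unfolding brick_def matching_covered_def graph_def by auto
  note barrier = finite B(1) F many_odd
  have parts: "K \<subseteq> V - B" if "K \<in> F" for K
    using separating_partition_subset[OF F that] .
  have odd_small: "card K \<le> 1" if K: "K \<in> odd_parts F" for K
  proof (rule ccontr)
    assume "\<not> card K \<le> 1"
    moreover have "card B \<le> card (V - K)"
      using parts K B(1) finite unfolding odd_parts_def by (intro card_mono) auto
    ultimately have "nontrivial_shore V K"
      using parts K B(2) unfolding nontrivial_shore_def odd_parts_def by auto
    moreover have "tight_cut V E K"
    proof (rule tight_cut_if_unique_exit[OF graph])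
      show "K \<subseteq> V"
        using parts K unfolding odd_parts_def by blast
      show "\<exists>!u. u \<in> K \<and> m u \<notin> K" if "perfect_matching_fun V E m" for m
        by (rule odd_part_unique_exit[OF barrier that K])
    qed
    ultimately show False
      using brick unfolding brick_def by blast
  qed
  have no_even: "u \<notin> K" if K: "K \<in> F" "even (card K)" for K u
  proof
    assume "u \<in> K"
    obtain b where "b \<in> B"
      using B(2) by fastforce
    then have "reachable E u b" "b \<notin> K"
      using connected parts[OF K(1)] \<open>u \<in> K\<close> B(1) unfolding connected_graph_def by blast+
    then obtain p q where pq: "{p, q} \<in> E" "p \<in> K" "q \<notin> K"
      using reachable_exit_edge \<open>u \<in> K\<close> by metis
    then obtain m where m: "perfect_matching_fun V E m" "m p = q"
      using matching_covered_partner[OF covered] by metis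
    then show False
      using even_part_matched_inside[OF barrier m(1) K pq(2)] pq(3) by simp
  qed
  have "card (e \<inter> B) = 1" if "e \<in> E" for e
  proof -
    obtain p q where e: "e = {p, q}" "p \<noteq> q"
      using graph \<open>e \<in> E\<close> unfolding graph_def by blast
    obtain m where m: "perfect_matching_fun V E m" "p \<in> V" "m p = q"
      using matching_covered_partner[OF covered] \<open>e \<in> E\<close> e(1) by metis
    have "q \<in> V"
      using perfect_matching_funD(1)[OF m(1,2)] m(3) by simp
    have "p \<in> B \<or> q \<in> B"
    proof (rule ccontr)
      assume "\<not> (p \<in> B \<or> q \<in> B)"
      then obtain K where K: "K \<in> F" "p \<in> K" "q \<in> K"
        using F m(2) \<open>q \<in> V\<close> \<open>e \<in> E\<close> e(1) unfolding separating_partition_def by blast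
      then have "card {p, q} \<le> card K"
        using parts finite by (intro card_mono) (auto intro: finite_subset)
      then show False
        using K no_even odd_small[of K] e(2) unfolding odd_parts_def by force
    qed
    moreover have "p \<in> B \<Longrightarrow> q \<notin> B" "q \<in> B \<Longrightarrow> p \<notin> B"
      using barrier_matched_outside[OF barrier m(1)] m(3) perfect_matching_funD(3)[OF m(1,2)] by auto
    ultimately show ?thesis
      using e by auto
  qed
  then have "bipartite V E"
    unfolding bipartite_def by blast
  then show False
    using brick unfolding brick_def by blast
qed

lemma even_card_if_matching_covered:
  assumes "matching_covered V E"
  shows "even (card V)"
proof -
  have graph: "graph V E" and "E \<noteq> {}"
    using assms unfolding matching_covered_def by auto
  then obtain e where "e \<in> E"
    by blast
  then obtain p q where "e = {p, q}"
    using graph unfolding graph_def by blast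
  then obtain m where "perfect_matching_fun V E m"
    using matching_covered_partner[OF assms] \<open>e \<in> E\<close> by metis
  moreover have "finite V"
    using graph unfolding graph_def by blast
  ultimately show ?thesis
    using even_card_if_fpf_involution unfolding perfect_matching_fun_def by blast
qed

text \<open>A brick is bicritical: a Tutte obstruction in \<open>G - a - b\<close> would, by parity, exceed its
  deficiency by two, so adding \<open>a\<close> and \<open>b\<close> to it gives a barrier of \<open>G\<close> with two vertices.\<close>
lemma brick_bicritical:
  assumes brick: "brick V E" and "a \<in> V" "b \<in> V" "a \<noteq> b"
  shows "\<exists>m. perfect_matching_fun (V - {a, b}) E m"
proof (rule perfect_matching_fun_if_tutte_condition)
  have finite: "finite V" and even: "even (card V)"
    using brick even_card_if_matching_covered unfolding brick_def matching_covered_def graph_def by auto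
  then show "finite (V - {a, b})"
    by simp
  show "tutte_condition (V - {a, b}) E"
    unfolding tutte_condition_def
  proof (intro allI impI)
    fix S F assume S: "S \<subseteq> V - {a, b}" and F: "separating_partition E (V - {a, b} - S) F"
    show "card (odd_parts F) \<le> card S"
    proof (rule ccontr)
      assume deficient: "\<not> card (odd_parts F) \<le> card S"
      define B where "B = S \<union> {a, b}"
      have "B \<subseteq> V" "V - B = V - {a, b} - S"
        using S assms(2,3) unfolding B_def by auto
      have "card B = card S + 2"
        using S assms(4) finite finite_subset unfolding B_def by (subst card_Un_disjoint) auto
      moreover have "card (V - B) = card V - card B" "card B \<le> card V"
        using \<open>B \<subseteq> V\<close> finite by (auto simp: card_Diff_subset finite_subset card_mono)
      moreover have "even (card (V - B)) \<longleftrightarrow> even (card (odd_parts F))"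
        using even_card_Union_iff[of F] F finite \<open>V - B = V - {a, b} - S\<close>
        unfolding separating_partition_def by simp
      ultimately have "card B \<le> card (odd_parts F)"
        using even deficient by presburger
      then show False
        using brick_no_barrier[OF brick \<open>B \<subseteq> V\<close>] \<open>card B = card S + 2\<close> F \<open>V - B = V - {a, b} - S\<close>
        by simp
    qed
  qed
qed

section \<open>Cubic bricks\<close>

lemma partner_edges_containing:
  assumes "perfect_matching_fun W E m"
  shows "{e \<in> (\<lambda>u. {u, m u}) ` W. x \<in> e} = (if x \<in> W then {{x, m x}} else {})"
proof -
  have "e = {x, m x} \<and> x \<in> W" if e: "e \<in> (\<lambda>u. {u, m u}) ` W" "x \<in> e" for e
  proof -
    obtain u where u: "u \<in> W" "e = {u, m u}"
      using e(1) by blast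
    then have "x = u \<or> x = m u"
      using e(2) by blast
    then show ?thesis
      using u perfect_matching_funD(1,3)[OF assms u(1)] by (auto simp: insert_commute)
  qed
  then show ?thesis
    by auto
qed

lemma v_matching_extend:
  assumes m: "perfect_matching_fun (V - {a, b}) E m"
    and edges: "{v, a} \<in> E" "{v, b} \<in> E" and "v \<in> V" "a \<noteq> b" "a \<noteq> v" "b \<noteq> v"
  shows "v_matching V E v (insert {v, a} (insert {v, b} ((\<lambda>u. {u, m u}) ` (V - {a, b}))))"
    (is "v_matching V E v ?F")
proof -
  have at: "{e \<in> ?F. x \<in> e} = {e \<in> {{v, a}, {v, b}}. x \<in> e} \<union> (if x \<in> V - {a, b} then {{x, m x}} else {})"
    for x
  proof -
    have "{e \<in> ?F. x \<in> e} = {e \<in> {{v, a}, {v, b}}. x \<in> e} \<union> {e \<in> (\<lambda>u. {u, m u}) ` (V - {a, b}). x \<in> e}"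
      by blast
    then show ?thesis
      unfolding partner_edges_containing[OF m] .
  qed
  have v: "v \<in> V - {a, b}"
    using assms(4,6,7) by blast
  then have "m v \<in> V - {a, b}"
    by (rule perfect_matching_funD(1)[OF m])
  then have "{v, a} \<noteq> {v, m v}" "{v, b} \<noteq> {v, m v}" "{v, a} \<noteq> {v, b}"
    using assms(5-7) by (auto simp: doubleton_eq_iff)
  moreover have "{e \<in> ?F. v \<in> e} = {{v, m v}, {v, a}, {v, b}}"
    using at[of v] v by auto
  ultimately have "card {e \<in> ?F. v \<in> e} = 3"
    by simp
  moreover have "card {e \<in> ?F. u \<in> e} = 1" if u: "u \<in> V - {v}" for u
  proof -
    consider "u = a" | "u = b" | "u \<in> V - {a, b}" "u \<noteq> v"
      using u by blast
    then have "{e \<in> ?F. u \<in> e} = {{v, u}} \<or> {e \<in> ?F. u \<in> e} = {{u, m u}}"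
    proof cases
      case 1
      then show ?thesis
        using at[of u] assms(5-7) by auto
    next
      case 2
      then show ?thesis
        using at[of u] assms(5-7) by auto
    next
      case 3
      then show ?thesis
        using at[of u] by auto
    qed
    then show ?thesis
      by (elim disjE) simp_all
  qed
  moreover have "?F \<subseteq> E"
    using edges perfect_matching_funD(4)[OF m] by auto
  ultimately show ?thesis
    unfolding v_matching_def degree_def by simp
qed

lemma two_neighbours:
  assumes "graph V E" "2 \<le> degree E v"
  obtains a b where "{v, a} \<in> E" "{v, b} \<in> E" "a \<noteq> b" "a \<in> V" "b \<in> V" "a \<noteq> v" "b \<noteq> v"
proof -
  have "finite {e \<in> E. v \<in> e}"
    using assms(2) unfolding degree_def by (metis card.infinite not_numeral_le_zero)
  then obtain e1 e2 where "e1 \<in> E" "v \<in> e1" "e2 \<in> E" "v \<in> e2" "e1 \<noteq> e2"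
    using assms(2) card_le_Suc0_iff_eq unfolding degree_def by (metis (lifting) mem_Collect_eq not_less_eq_eq numeral_2_eq_2)
  then obtain a b where "e1 = {v, a}" "a \<noteq> v" "a \<in> V" "e2 = {v, b}" "b \<noteq> v" "b \<in> V"
    using graph_edge_at[OF assms(1)] by metis
  then show ?thesis
    using that \<open>e1 \<in> E\<close> \<open>e2 \<in> E\<close> \<open>e1 \<noteq> e2\<close> by blast
qed

theorem proposition1p17:
  fixes V :: "'a set" and E :: "'a set set"
  assumes "cubic V E" and "brick V E"
  shows "(\<forall>v\<in>V. lambda_matchable V E v) \<and> lambda V E = card V"
proof -
  have graph: "graph V E"
    using assms(1) unfolding cubic_def by blast
  have matchable: "lambda_matchable V E v" if v: "v \<in> V" for v
  proof -
    have "degree E v = 3"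
      using assms(1) v unfolding cubic_def by blast
    then have "2 \<le> degree E v"
      by simp
    then obtain a b where ab: "{v, a} \<in> E" "{v, b} \<in> E" "a \<noteq> b" "a \<in> V" "b \<in> V" "a \<noteq> v" "b \<noteq> v"
      by (rule two_neighbours[OF graph])
    obtain m where m: "perfect_matching_fun (V - {a, b}) E m"
      using brick_bicritical[OF assms(2) ab(4,5,3)] by blast
    show ?thesis
      using v_matching_extend[OF m ab(1,2) v ab(3,6,7)] v unfolding lambda_matchable_def by blast
  qed
  then have "{v \<in> V. lambda_matchable V E v} = V"
    by blast
  with matchable show ?thesis
    unfolding lambda_def by simp
qed

end
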